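(* Let $H$ be a separable Hilbert space, $(\Omega,\mathcal{A},\mu)$ a measure space, $f\in L^\infty_\mu(\Omega)$ real-valued with multiplication operator $M_f$ on $L^2_\mu(\Omega)$, and $V:H\to L^2_\mu(\Omega)$ an invertible bounded linear operator such that $A=V^{-1}M_fV$ is surjective. Let $\mathcal{F}(x):=-\frac12(Vx,M_fVx)_{L^2_\mu(\Omega)}$. Then $\mathcal{F}$ is $\tilde\lambda$-convex on the Hilbert space $H$, i.e. $\mathcal{F}((1-\theta)x_1+\theta x_2)\le(1-\theta)\mathcal{F}(x_1)+\theta\mathcal{F}(x_2)-\tilde\lambda\frac{\theta(1-\theta)}{2}\|x_1-x_2\|_H^2$ for all $x_1,x_2\in H$, $\theta\in[0,1]$, where $$\tilde\lambda:=-\operatorname*{ess\,sup}_{\omega\in\Omega}f(\omega)\,\tilde c_V,\qquad \tilde c_V:=\begin{cases}\|V\|^2,&\text{if }\operatorname*{ess\,sup}_\Omega f\ge0,\\ \|V^{-1}\|^{-2},&\text{otherwise},\end{cases}$$ with operator norms $\|V\|$ in $L(H,L^2_\mu(\Omega))$ and $\|V^{-1}\|$ in $L(L^2_\mu(\Omega),H)$.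
   Context: $M_f(\varphi)(\omega)=f(\omega)\varphi(\omega)$ for $\mu$-a.e. $\omega$. *)

theory Defs
  imports "HOL-Probability.Probability"
begin

text \<open>Elements of L^2_mu(Omega) are represented by real-valued square-integrable
  functions; equality in L^2 is equality mu-almost everywhere.\<close>

definition sq_int :: "'w measure \<Rightarrow> ('w \<Rightarrow> real) \<Rightarrow> bool" where
  "sq_int M g \<longleftrightarrow> g \<in> borel_measurable M \<and> integrable M (\<lambda>\<omega>. (g \<omega>)\<^sup>2)"

definition L2_inner :: "'w measure \<Rightarrow> ('w \<Rightarrow> real) \<Rightarrow> ('w \<Rightarrow> real) \<Rightarrow> real" where
  "L2_inner M g h = (\<integral>\<omega>. g \<omega> * h \<omega> \<partial>M)"

definition L2_norm :: "'w measure \<Rightarrow> ('w \<Rightarrow> real) \<Rightarrow> real" where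
  "L2_norm M g = sqrt (L2_inner M g g)"

definition Linf :: "'w measure \<Rightarrow> ('w \<Rightarrow> real) \<Rightarrow> bool" where
  "Linf M f \<longleftrightarrow> f \<in> borel_measurable M \<and> (\<exists>C. AE \<omega> in M. \<bar>f \<omega>\<bar> \<le> C)"

definition mult_op :: "('w \<Rightarrow> real) \<Rightarrow> ('w \<Rightarrow> real) \<Rightarrow> ('w \<Rightarrow> real)" where
  "mult_op f \<phi> = (\<lambda>\<omega>. f \<omega> * \<phi> \<omega>)"

definition bounded_linear_to_L2 :: "'w measure \<Rightarrow> ('h::real_normed_vector \<Rightarrow> 'w \<Rightarrow> real) \<Rightarrow> bool" where
  "bounded_linear_to_L2 M V \<longleftrightarrow>
     (\<forall>x. sq_int M (V x)) \<and>
     (\<forall>a b x y. AE \<omega> in M. V (a *\<^sub>R x + b *\<^sub>R y) \<omega> = a * V x \<omega> + b * V y \<omega>) \<and>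
     (\<exists>C. \<forall>x. L2_norm M (V x) \<le> C * norm x)"

definition invertible_to_L2 :: "'w measure \<Rightarrow> ('h::real_normed_vector \<Rightarrow> 'w \<Rightarrow> real) \<Rightarrow> bool" where
  "invertible_to_L2 M V \<longleftrightarrow>
     (\<forall>x y. (AE \<omega> in M. V x \<omega> = V y \<omega>) \<longrightarrow> x = y) \<and>
     (\<forall>g. sq_int M g \<longrightarrow> (\<exists>x. AE \<omega> in M. V x \<omega> = g \<omega>)) \<and>
     (\<exists>C. \<forall>x. norm x \<le> C * L2_norm M (V x))"

definition inv_op :: "'w measure \<Rightarrow> ('h \<Rightarrow> 'w \<Rightarrow> real) \<Rightarrow> ('w \<Rightarrow> real) \<Rightarrow> 'h" where
  "inv_op M V g = (SOME x. AE \<omega> in M. V x \<omega> = g \<omega>)"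

text \<open>Operator norms (as Isabelle's onorm: SUP of ratio, 0/0 = 0).\<close>
definition op_norm_V :: "'w measure \<Rightarrow> ('h::real_normed_vector \<Rightarrow> 'w \<Rightarrow> real) \<Rightarrow> real" where
  "op_norm_V M V = (SUP x. L2_norm M (V x) / norm x)"

definition op_norm_Vinv :: "'w measure \<Rightarrow> ('h::real_normed_vector \<Rightarrow> 'w \<Rightarrow> real) \<Rightarrow> real" where
  "op_norm_Vinv M V = (SUP g\<in>{g. sq_int M g}. norm (inv_op M V g) / L2_norm M g)"

definition ess_sup_real :: "'w measure \<Rightarrow> ('w \<Rightarrow> real) \<Rightarrow> real" where
  "ess_sup_real M f = real_of_ereal (esssup M (\<lambda>\<omega>. ereal (f \<omega>)))"

definition c_tilde :: "'w measure \<Rightarrow> ('w \<Rightarrow> real) \<Rightarrow> ('h::real_normed_vector \<Rightarrow> 'w \<Rightarrow> real) \<Rightarrow> real" where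
  "c_tilde M f V = (if ess_sup_real M f \<ge> 0 then (op_norm_V M V)\<^sup>2 else 1 / (op_norm_Vinv M V)\<^sup>2)"

definition lambda_tilde :: "'w measure \<Rightarrow> ('w \<Rightarrow> real) \<Rightarrow> ('h::real_normed_vector \<Rightarrow> 'w \<Rightarrow> real) \<Rightarrow> real" where
  "lambda_tilde M f V = - ess_sup_real M f * c_tilde M f V"

definition lambda_convex :: "real \<Rightarrow> ('h::real_normed_vector \<Rightarrow> real) \<Rightarrow> bool" where
  "lambda_convex lam F \<longleftrightarrow> (\<forall>x1 x2 \<theta>. 0 \<le> \<theta> \<and> \<theta> \<le> 1 \<longrightarrow>
     F ((1 - \<theta>) *\<^sub>R x1 + \<theta> *\<^sub>R x2) \<le> (1 - \<theta>) * F x1 + \<theta> * F x2 - lam * (\<theta> * (1 - \<theta>) / 2) * (norm (x1 - x2))\<^sup>2)"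

end

theory Submission
  imports Defs
begin

text \<open>Let S be the essential supremum of f and Q x = (Vx, M_f Vx).  Pointwise under the
  integral Q x <= S ||Vx||^2, and ||V^-1||^-1 ||x|| <= ||Vx|| <= ||V|| ||x||; using the upper
  bound when S >= 0 and the lower one when S < 0 gives Q x <= S c_V ||x||^2.  Since Q is
  quadratic, Q((1-t)x1 + t x2) = (1-t) Q x1 + t Q x2 - t(1-t) Q(x1 - x2), so this bound on
  Q(x1 - x2) is exactly the lambda-convexity of -Q/2.\<close>

definition mult_quadratic_form ::
    "'w measure \<Rightarrow> ('w \<Rightarrow> real) \<Rightarrow> ('h \<Rightarrow> 'w \<Rightarrow> real) \<Rightarrow> 'h \<Rightarrow> real" where
  "mult_quadratic_form M f V x = L2_inner M (V x) (mult_op f (V x))"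

lemma L2_norm_nonneg: "0 \<le> L2_norm M g"
  unfolding L2_norm_def L2_inner_def by (simp add: integral_nonneg_AE)

lemma L2_norm_power2: "(L2_norm M g)\<^sup>2 = (\<integral>\<omega>. (g \<omega>)\<^sup>2 \<partial>M)"
  unfolding L2_norm_def L2_inner_def by (simp add: integral_nonneg_AE power2_eq_square)

lemma L2_norm_cong_AE:
  assumes "sq_int M g" "sq_int M h" "AE \<omega> in M. g \<omega> = h \<omega>"
  shows "L2_norm M g = L2_norm M h"
  unfolding L2_norm_def L2_inner_def
  using assms by (intro arg_cong[where f = sqrt] integral_cong_AE) (auto simp: sq_int_def)

lemma integrable_mult_op:
  assumes f: "Linf M f" and g: "sq_int M g"
  shows "integrable M (\<lambda>\<omega>. g \<omega> * mult_op f g \<omega>)"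
proof -
  obtain C where C: "AE \<omega> in M. \<bar>f \<omega>\<bar> \<le> C" and fm: "f \<in> borel_measurable M"
    using f unfolding Linf_def by blast
  have gm: "g \<in> borel_measurable M" and g2: "integrable M (\<lambda>\<omega>. (g \<omega>)\<^sup>2)"
    using g unfolding sq_int_def by auto
  show ?thesis
  proof (rule Bochner_Integration.integrable_bound)
    show "integrable M (\<lambda>\<omega>. C * (g \<omega>)\<^sup>2)"
      using g2 by simp
    show "(\<lambda>\<omega>. g \<omega> * mult_op f g \<omega>) \<in> borel_measurable M"
      unfolding mult_op_def using fm gm by measurable
    show "AE \<omega> in M. norm (g \<omega> * mult_op f g \<omega>) \<le> norm (C * (g \<omega>)\<^sup>2)"
      using C
    proof eventually_elim
      case (elim \<omega>)
      have "norm (g \<omega> * mult_op f g \<omega>) = \<bar>f \<omega>\<bar> * (g \<omega>)\<^sup>2"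
        by (simp add: mult_op_def abs_mult power2_eq_square)
      also have "\<dots> \<le> norm (C * (g \<omega>)\<^sup>2)"
        using elim by (simp add: mult_right_mono)
      finally show ?case .
    qed
  qed
qed

text \<open>If the essential supremum is -\<infinity>, then M is null, so the junk value 0 is harmless.\<close>

lemma AE_le_ess_sup_real:
  assumes "Linf M f"
  shows "AE \<omega> in M. f \<omega> \<le> ess_sup_real M f"
proof -
  obtain B where B: "AE \<omega> in M. \<bar>f \<omega>\<bar> \<le> B" and fm: "f \<in> borel_measurable M"
    using assms unfolding Linf_def by blast
  have "esssup M (\<lambda>\<omega>. ereal (f \<omega>)) \<le> ereal B"
    using B fm by (intro esssup_I) (auto elim!: eventually_mono)
  then consider "esssup M (\<lambda>\<omega>. ereal (f \<omega>)) = - \<infinity>"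
    | "esssup M (\<lambda>\<omega>. ereal (f \<omega>)) = ereal (ess_sup_real M f)"
    unfolding ess_sup_real_def by (cases "esssup M (\<lambda>\<omega>. ereal (f \<omega>))") auto
  then show ?thesis
    using esssup_AE[of "\<lambda>\<omega>. ereal (f \<omega>)" M] by cases (auto elim!: eventually_mono)
qed

lemma L2_inner_mult_op_le_ess_sup:
  assumes f: "Linf M f" and g: "sq_int M g"
  shows "L2_inner M g (mult_op f g) \<le> ess_sup_real M f * (L2_norm M g)\<^sup>2"
proof -
  have "L2_inner M g (mult_op f g) \<le> (\<integral>\<omega>. ess_sup_real M f * (g \<omega>)\<^sup>2 \<partial>M)"
    unfolding L2_inner_def
  proof (rule integral_mono_AE)
    show "integrable M (\<lambda>\<omega>. g \<omega> * mult_op f g \<omega>)"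
      using f g by (rule integrable_mult_op)
    show "integrable M (\<lambda>\<omega>. ess_sup_real M f * (g \<omega>)\<^sup>2)"
      using g unfolding sq_int_def by simp
    show "AE \<omega> in M. g \<omega> * mult_op f g \<omega> \<le> ess_sup_real M f * (g \<omega>)\<^sup>2"
      using AE_le_ess_sup_real[OF f]
    proof eventually_elim
      case (elim \<omega>)
      have "g \<omega> * mult_op f g \<omega> = f \<omega> * (g \<omega>)\<^sup>2"
        by (simp add: mult_op_def power2_eq_square)
      also have "\<dots> \<le> ess_sup_real M f * (g \<omega>)\<^sup>2"
        using elim by (simp add: mult_right_mono)
      finally show ?case .
    qed
  qed
  then show ?thesis
    by (simp add: L2_norm_power2)
qed

lemma L2_norm_le_op_norm_V:
  assumes "bounded_linear_to_L2 M V"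
  shows "L2_norm M (V x) \<le> op_norm_V M V * norm x"
proof -
  obtain C where C: "\<And>x. L2_norm M (V x) \<le> C * norm x"
    using assms unfolding bounded_linear_to_L2_def by blast
  have "L2_norm M (V y) \<le> \<bar>C\<bar> * norm y" for y
    using C[of y] mult_right_mono[OF abs_ge_self[of C] norm_ge_zero[of y]] by linarith
  then have "L2_norm M (V y) / norm y \<le> \<bar>C\<bar>" for y
    by (cases "y = 0") (simp_all add: divide_le_eq)
  then have "bdd_above (range (\<lambda>y. L2_norm M (V y) / norm y))"
    by (rule bdd_aboveI2)
  then have ratio: "L2_norm M (V x) / norm x \<le> op_norm_V M V"
    unfolding op_norm_V_def by (rule cSUP_upper[OF UNIV_I])
  show ?thesis
  proof (cases "x = 0")
    case True
    then show ?thesis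
      using C[of 0] L2_norm_nonneg[of M "V 0"] by simp
  next
    case False
    then show ?thesis
      using ratio by (simp add: divide_le_eq mult.commute)
  qed
qed

lemma AE_V_inv_op:
  assumes "invertible_to_L2 M V" "sq_int M g"
  shows "AE \<omega> in M. V (inv_op M V g) \<omega> = g \<omega>"
proof -
  obtain x where "AE \<omega> in M. V x \<omega> = g \<omega>"
    using assms unfolding invertible_to_L2_def by blast
  then show ?thesis
    unfolding inv_op_def by (rule someI)
qed

lemma inv_op_V:
  assumes "invertible_to_L2 M V" "sq_int M (V x)"
  shows "inv_op M V (V x) = x"
proof -
  have "\<And>x y. (AE \<omega> in M. V x \<omega> = V y \<omega>) \<Longrightarrow> x = y"
    using assms(1) unfolding invertible_to_L2_def by blast
  then show ?thesis
    using AE_V_inv_op[OF assms] .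
qed

lemma norm_le_op_norm_Vinv:
  assumes V: "bounded_linear_to_L2 M V" and V_inv: "invertible_to_L2 M V"
  shows "norm x \<le> op_norm_Vinv M V * L2_norm M (V x)"
proof -
  have sq: "sq_int M (V y)" for y
    using V unfolding bounded_linear_to_L2_def by blast
  obtain D where D: "\<And>y. norm y \<le> D * L2_norm M (V y)"
    using V_inv unfolding invertible_to_L2_def by blast
  have "norm (inv_op M V g) / L2_norm M g \<le> \<bar>D\<bar>" if g: "sq_int M g" for g
  proof -
    have "L2_norm M (V (inv_op M V g)) = L2_norm M g"
      using sq g AE_V_inv_op[OF V_inv g] by (rule L2_norm_cong_AE)
    then have "norm (inv_op M V g) \<le> D * L2_norm M g"
      using D[of "inv_op M V g"] by simp
    then have "norm (inv_op M V g) \<le> \<bar>D\<bar> * L2_norm M g"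
      using mult_right_mono[OF abs_ge_self[of D] L2_norm_nonneg[of M g]]
      by linarith
    then show ?thesis
      using L2_norm_nonneg[of M g] by (cases "L2_norm M g = 0") (auto simp: divide_le_eq)
  qed
  then have bdd: "bdd_above ((\<lambda>g. norm (inv_op M V g) / L2_norm M g) ` {g. sq_int M g})"
    by (intro bdd_aboveI2) blast
  have "norm (inv_op M V (V x)) / L2_norm M (V x) \<le> op_norm_Vinv M V"
    unfolding op_norm_Vinv_def by (rule cSUP_upper[OF _ bdd]) (simp add: sq)
  then have ratio: "norm x / L2_norm M (V x) \<le> op_norm_Vinv M V"
    by (simp add: inv_op_V[OF V_inv sq])
  show ?thesis
  proof (cases "L2_norm M (V x) = 0")
    case True
    then show ?thesis
      using D[of x] by simp
  next
    case False
    then show ?thesis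
      using ratio L2_norm_nonneg[of M "V x"] by (simp add: divide_le_eq mult.commute)
  qed
qed

lemma mult_quadratic_form_le_c_tilde:
  assumes f: "Linf M f" and V: "bounded_linear_to_L2 M V" and V_inv: "invertible_to_L2 M V"
  shows "mult_quadratic_form M f V x \<le> ess_sup_real M f * c_tilde M f V * (norm x)\<^sup>2"
proof -
  define S where "S = ess_sup_real M f"
  define N where "N = L2_norm M (V x)"
  have "mult_quadratic_form M f V x \<le> S * N\<^sup>2"
    unfolding mult_quadratic_form_def S_def N_def
    using f V unfolding bounded_linear_to_L2_def by (blast intro: L2_inner_mult_op_le_ess_sup)
  also have "S * N\<^sup>2 \<le> S * c_tilde M f V * (norm x)\<^sup>2"
  proof (cases "S \<ge> 0")
    case True
    have "N\<^sup>2 \<le> (op_norm_V M V * norm x)\<^sup>2"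
      unfolding N_def using L2_norm_le_op_norm_V[OF V] L2_norm_nonneg by (rule power_mono)
    then show ?thesis
      using True by (simp add: c_tilde_def S_def mult_left_mono power_mult_distrib mult.assoc)
  next
    case False
    define K where "K = op_norm_Vinv M V"
    have "S * N\<^sup>2 \<le> S / K\<^sup>2 * (norm x)\<^sup>2"
    proof (cases "K = 0")
      case True
      then show ?thesis
        using False by (simp add: mult_nonpos_nonneg)
    next
      case K: False
      have "(norm x)\<^sup>2 \<le> (K * N)\<^sup>2"
        unfolding K_def N_def by (rule power_mono[OF norm_le_op_norm_Vinv[OF V V_inv]]) simp
      then have "(norm x)\<^sup>2 / K\<^sup>2 \<le> N\<^sup>2"
        using K by (simp add: divide_le_eq power_mult_distrib mult.commute)
      then show ?thesis
        using False mult_left_mono_neg[of "(norm x)\<^sup>2 / K\<^sup>2" "N\<^sup>2" S] by simp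
    qed
    then show ?thesis
      using False by (simp add: c_tilde_def S_def K_def)
  qed
  finally show ?thesis
    unfolding S_def .
qed

lemma mult_quadratic_form_convex_comb:
  assumes f: "Linf M f" and V: "bounded_linear_to_L2 M V"
  shows "mult_quadratic_form M f V ((1 - \<theta>) *\<^sub>R x\<^sub>1 + \<theta> *\<^sub>R x\<^sub>2)
    = (1 - \<theta>) * mult_quadratic_form M f V x\<^sub>1 + \<theta> * mult_quadratic_form M f V x\<^sub>2
      - \<theta> * (1 - \<theta>) * mult_quadratic_form M f V (x\<^sub>1 - x\<^sub>2)"
proof -
  let ?y = "(1 - \<theta>) *\<^sub>R x\<^sub>1 + \<theta> *\<^sub>R x\<^sub>2" and ?d = "x\<^sub>1 - x\<^sub>2"
  let ?q = "\<lambda>x \<omega>. V x \<omega> * mult_op f (V x) \<omega>"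
  have lin: "AE \<omega> in M. V (a *\<^sub>R x + b *\<^sub>R y) \<omega> = a * V x \<omega> + b * V y \<omega>" for a b x y
    using V unfolding bounded_linear_to_L2_def by blast
  have int: "integrable M (?q x)" for x
    using V unfolding bounded_linear_to_L2_def by (intro integrable_mult_op[OF f]) blast
  have y: "AE \<omega> in M. V ?y \<omega> = (1 - \<theta>) * V x\<^sub>1 \<omega> + \<theta> * V x\<^sub>2 \<omega>"
    by (rule lin)
  have d: "AE \<omega> in M. V ?d \<omega> = V x\<^sub>1 \<omega> - V x\<^sub>2 \<omega>"
    using lin[of 1 x\<^sub>1 "-1" x\<^sub>2] by simp
  have "AE \<omega> in M. ?q ?y \<omega> = (1 - \<theta>) * ?q x\<^sub>1 \<omega> + \<theta> * ?q x\<^sub>2 \<omega> - \<theta> * (1 - \<theta>) * ?q ?d \<omega>"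
    using y d
  proof eventually_elim
    case (elim \<omega>)
    show ?case
      unfolding mult_op_def elim by (simp add: algebra_simps)
  qed
  then have "(\<integral>\<omega>. ?q ?y \<omega> \<partial>M)
      = (\<integral>\<omega>. (1 - \<theta>) * ?q x\<^sub>1 \<omega> + \<theta> * ?q x\<^sub>2 \<omega> - \<theta> * (1 - \<theta>) * ?q ?d \<omega> \<partial>M)"
    using int by (intro integral_cong_AE) auto
  then show ?thesis
    unfolding mult_quadratic_form_def L2_inner_def using int by simp
qed

lemma lambda_convex_neg_half_quadratic:
  fixes Q :: "'h::real_normed_vector \<Rightarrow> real"
  assumes convex_comb: "\<And>x\<^sub>1 x\<^sub>2 \<theta>. Q ((1 - \<theta>) *\<^sub>R x\<^sub>1 + \<theta> *\<^sub>R x\<^sub>2)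
      = (1 - \<theta>) * Q x\<^sub>1 + \<theta> * Q x\<^sub>2 - \<theta> * (1 - \<theta>) * Q (x\<^sub>1 - x\<^sub>2)"
    and bound: "\<And>x. Q x \<le> c * (norm x)\<^sup>2"
  shows "lambda_convex (- c) (\<lambda>x. - (1/2) * Q x)"
  unfolding lambda_convex_def
proof (intro allI impI)
  fix x\<^sub>1 x\<^sub>2 :: 'h and \<theta> :: real
  assume "0 \<le> \<theta> \<and> \<theta> \<le> 1"
  then have "\<theta> * (1 - \<theta>) * Q (x\<^sub>1 - x\<^sub>2) \<le> \<theta> * (1 - \<theta>) * (c * (norm (x\<^sub>1 - x\<^sub>2))\<^sup>2)"
    by (intro mult_left_mono bound) auto
  then show "- (1/2) * Q ((1 - \<theta>) *\<^sub>R x\<^sub>1 + \<theta> *\<^sub>R x\<^sub>2)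
      \<le> (1 - \<theta>) * (- (1/2) * Q x\<^sub>1) + \<theta> * (- (1/2) * Q x\<^sub>2)
        - - c * (\<theta> * (1 - \<theta>) / 2) * (norm (x\<^sub>1 - x\<^sub>2))\<^sup>2"
    unfolding convex_comb by (simp add: field_simps)
qed

theorem mainTheorem3:
  fixes M :: "'w measure"
    and f :: "'w \<Rightarrow> real"
    and V :: "'h::{real_inner, complete_space, second_countable_topology} \<Rightarrow> 'w \<Rightarrow> real"
  assumes f_Linf: "Linf M f"
    and V_bdd: "bounded_linear_to_L2 M V"
    and V_inv: "invertible_to_L2 M V"
    and A_surj: "\<forall>y. \<exists>x. AE \<omega> in M. mult_op f (V x) \<omega> = V y \<omega>"
  shows "lambda_convex (lambda_tilde M f V) (\<lambda>x. - (1/2) * L2_inner M (V x) (mult_op f (V x)))"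
proof -
  have "lambda_convex (- (ess_sup_real M f * c_tilde M f V))
      (\<lambda>x. - (1/2) * mult_quadratic_form M f V x)"
    using mult_quadratic_form_convex_comb[OF f_Linf V_bdd]
      mult_quadratic_form_le_c_tilde[OF f_Linf V_bdd V_inv]
    by (rule lambda_convex_neg_half_quadratic)
  then show ?thesis
    by (simp add: lambda_tilde_def mult_quadratic_form_def)
qed

end
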